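(* Let $n\ge 2$ and let $p, p', s \in B_{n}$, regarded as elements of $B_{n+1}$ via the standard inclusion. Then $$p' = s*p \quad \text{in } B_{n+1}$$ if and only if $$p'\, \delta_{n+1}^{-1} = s \cdot d(p)\, \sigma_1\, \delta_{n+1}^{-1} \cdot s^{-1} \quad \text{in } B_{n+1}.$$
   Context: $B_m$ denotes the braid group on $m$ strands with Artin generators $\sigma_1,\dots,\sigma_{m-1}$ and relations $\sigma_i\sigma_j\sigma_i=\sigma_j\sigma_i\sigma_j$ for $|i-j|=1$, $\sigma_i\sigma_j=\sigma_j\sigma_i$ for $|i-j|>1$; $B_\infty$ is the braid group on generators $\sigma_1,\sigma_2,\dots$ with the same relations, and $B_m\subset B_{m+1}\subset B_\infty$ via the generators. The shift $d$ is the monomorphism of $B_\infty$ induced by $\sigma_{i_1}^{\varepsilon_1}\cdots\sigma_{i_k}^{\varepsilon_k}\mapsto \sigma_{i_1+1}^{\varepsilon_1}\cdots\sigma_{i_k+1}^{\varepsilon_k}$. The shifted conjugacy operator is $a*b = a\cdot d(b)\cdot \sigma_1\cdot d(a^{-1})$ for $a,b\in B_\infty$. Also $\delta_{n+1} = \sigma_{n}\sigma_{n-1}\cdots\sigma_1 \in B_{n+1}$. *)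

theory Defs
  imports Main
begin

text \<open>Braid words: a letter (i, True) is the Artin generator sigma_i, (i, False) is its
inverse. Generators are indexed from 1.\<close>

type_synonym bword = "(nat \<times> bool) list"

definition sig :: "nat \<Rightarrow> bword" where
  "sig i = [(i, True)]"

definition binv :: "bword \<Rightarrow> bword" where
  "binv w = rev (map (\<lambda>(i, b). (i, \<not> b)) w)"

definition shift :: "bword \<Rightarrow> bword" where
  "shift w = map (\<lambda>(i, b). (Suc i, b)) w"

definition in_B :: "nat \<Rightarrow> bword \<Rightarrow> bool" where
  "in_B m w \<longleftrightarrow> (\<forall>(i, b) \<in> set w. 1 \<le> i \<and> i < m)"

text \<open>Equality in B_m: the congruence on words generated by free cancellation and the
braid relations among sigma_1, ..., sigma_(m-1).\<close>
inductive braid_eq :: "nat \<Rightarrow> bword \<Rightarrow> bword \<Rightarrow> bool" for m :: nat where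
  refl: "braid_eq m u u"
| sym: "braid_eq m u v \<Longrightarrow> braid_eq m v u"
| trans: "braid_eq m u v \<Longrightarrow> braid_eq m v w \<Longrightarrow> braid_eq m u w"
| ctxt: "braid_eq m u v \<Longrightarrow> braid_eq m (x @ u @ y) (x @ v @ y)"
| cancel: "1 \<le> i \<Longrightarrow> i < m \<Longrightarrow> braid_eq m [(i, b), (i, \<not> b)] []"
| braid: "1 \<le> i \<Longrightarrow> Suc i < m \<Longrightarrow>
    braid_eq m (sig i @ sig (Suc i) @ sig i) (sig (Suc i) @ sig i @ sig (Suc i))"
| comm: "1 \<le> i \<Longrightarrow> Suc i < j \<Longrightarrow> j < m \<Longrightarrow>
    braid_eq m (sig i @ sig j) (sig j @ sig i)"

text \<open>Shifted conjugacy a * b = a d(b) sigma_1 d(a^-1).\<close>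
definition sconj :: "bword \<Rightarrow> bword \<Rightarrow> bword" where
  "sconj a b = a @ shift b @ sig 1 @ shift (binv a)"

text \<open>delta_(n+1) = sigma_n sigma_(n-1) ... sigma_1.\<close>
definition delta :: "nat \<Rightarrow> bword" where
  "delta n = map (\<lambda>i. (i, True)) (rev [1..<n])"

end

theory Submission
  imports Defs
begin

text \<open>The element delta = delta_(n+1) satisfies delta sigma_(i+1) = sigma_i delta for 1 \<le> i < n
  (one braid relation plus far commutations), hence delta d(w) = w delta in B_(n+1) for every
  w in B_n.  Inverting, d(s^-1) delta^-1 = delta^-1 s^-1, so
  (s * p) delta^-1 = s d(p) sigma_1 d(s^-1) delta^-1 = s d(p) sigma_1 delta^-1 s^-1,
  and the equivalence follows by cancelling delta^-1 on the right.\<close>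

declare braid_eq.trans [trans]

lemma braid_eq_append:
  "braid_eq m u u' \<Longrightarrow> braid_eq m v v' \<Longrightarrow> braid_eq m (u @ v) (u' @ v')"
  using braid_eq.ctxt[of m u u' "[]" v] braid_eq.ctxt[of m v v' u' "[]"]
  by (auto intro: braid_eq.trans)

lemma braid_eq_append_left: "braid_eq m v v' \<Longrightarrow> braid_eq m (x @ v) (x @ v')"
  by (rule braid_eq_append[OF braid_eq.refl])

lemma braid_eq_append_right: "braid_eq m v v' \<Longrightarrow> braid_eq m (v @ x) (v' @ x)"
  by (rule braid_eq_append[OF _ braid_eq.refl])

lemma binv_Cons: "binv ((i, b) # w) = binv w @ [(i, \<not> b)]"
  by (simp add: binv_def)

lemma binv_binv [simp]: "binv (binv w) = w"
  by (induct w) (auto simp: binv_def)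

lemma in_B_binv: "in_B m w \<Longrightarrow> in_B m (binv w)"
  by (auto simp: in_B_def binv_def)

lemma braid_eq_append_binv: "in_B m w \<Longrightarrow> braid_eq m (w @ binv w) []"
proof (induct w)
  case Nil
  show ?case by (simp add: binv_def braid_eq.refl)
next
  case (Cons a w)
  obtain i b where a: "a = (i, b)" by (cases a)
  with Cons.prems have w: "in_B m w" and i: "1 \<le> i" "i < m" by (auto simp: in_B_def)
  have "braid_eq m ([(i, b)] @ (w @ binv w) @ [(i, \<not> b)]) ([(i, b)] @ [] @ [(i, \<not> b)])"
    by (rule braid_eq.ctxt[OF Cons.hyps[OF w]])
  also have "braid_eq m ([(i, b)] @ [] @ [(i, \<not> b)]) []"
    using braid_eq.cancel[OF i] by simp
  finally show ?case by (simp add: a binv_Cons)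
qed

lemma braid_eq_binv_append: "in_B m w \<Longrightarrow> braid_eq m (binv w @ w) []"
  using braid_eq_append_binv[OF in_B_binv, of m w] by simp

lemma braid_eq_append_cancel_right:
  assumes "in_B m w"
  shows "braid_eq m (u @ w) (v @ w) \<longleftrightarrow> braid_eq m u v"
proof
  assume uv: "braid_eq m (u @ w) (v @ w)"
  have "braid_eq m u (u @ w @ binv w)"
    using braid_eq_append_left[OF braid_eq_append_binv[OF assms], of u]
    by (simp add: braid_eq.sym)
  also have "braid_eq m \<dots> (v @ w @ binv w)"
    using braid_eq_append_right[OF uv, of "binv w"] by simp
  also have "braid_eq m \<dots> v"
    using braid_eq_append_left[OF braid_eq_append_binv[OF assms], of v] by simp
  finally show "braid_eq m u v" .
qed (rule braid_eq_append_right)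

lemma braid_eq_intertwine_binv:
  assumes "in_B m x" "in_B m y" and uxy: "braid_eq m (u @ x) (y @ u)"
  shows "braid_eq m (u @ binv x) (binv y @ u)"
proof -
  have "braid_eq m (u @ binv x) (binv y @ y @ u @ binv x)"
    using braid_eq_append_right[OF braid_eq_binv_append[OF assms(2)], of "u @ binv x"]
    by (simp add: braid_eq.sym)
  also have "braid_eq m \<dots> (binv y @ u @ x @ binv x)"
    using braid_eq.ctxt[OF braid_eq.sym[OF uxy], of "binv y" "binv x"] by simp
  also have "braid_eq m \<dots> (binv y @ u)"
    using braid_eq_append_left[OF braid_eq_append_binv[OF assms(1)], of "binv y @ u"] by simp
  finally show ?thesis .
qed

lemma braid_eq_intertwine_conj:
  assumes "in_B m u" and uxy: "braid_eq m (u @ x) (y @ u)"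
  shows "braid_eq m (x @ binv u) (binv u @ y)"
proof -
  have "braid_eq m (x @ binv u) (binv u @ u @ x @ binv u)"
    using braid_eq_append_right[OF braid_eq_binv_append[OF assms(1)], of "x @ binv u"]
    by (simp add: braid_eq.sym)
  also have "braid_eq m \<dots> (binv u @ y @ u @ binv u)"
    using braid_eq.ctxt[OF uxy, of "binv u" "binv u"] by simp
  also have "braid_eq m \<dots> (binv u @ y)"
    using braid_eq_append_left[OF braid_eq_append_binv[OF assms(1)], of "binv u @ y"] by simp
  finally show ?thesis .
qed

lemma sig_commute_far_positive_word:
  assumes "1 \<le> i" "i < m" and far: "\<forall>j \<in> set js. 1 \<le> j \<and> j < m \<and> (Suc i < j \<or> Suc j < i)"
  shows "braid_eq m (sig i @ map (\<lambda>j. (j, True)) js) (map (\<lambda>j. (j, True)) js @ sig i)"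
  using far
proof (induct js)
  case Nil
  show ?case by (simp add: braid_eq.refl)
next
  case (Cons j js)
  have "braid_eq m (sig i @ sig j) (sig j @ sig i)"
    using Cons.prems assms(1,2) braid_eq.comm[of i j m] braid_eq.sym[OF braid_eq.comm[of j i m]]
    by auto
  then have "braid_eq m ((sig i @ sig j) @ map (\<lambda>j. (j, True)) js)
                        ((sig j @ sig i) @ map (\<lambda>j. (j, True)) js)"
    by (rule braid_eq_append_right)
  also have "braid_eq m \<dots> (sig j @ map (\<lambda>j. (j, True)) js @ sig i)"
    using braid_eq_append_left[OF Cons.hyps] Cons.prems by simp
  finally show ?case by (simp add: sig_def)
qed

lemma delta_split:
  assumes "1 \<le> i" "i < n"
  shows "delta (Suc n) = map (\<lambda>j. (j, True)) (rev [Suc (Suc i)..<Suc n]) @ sig (Suc i) @ sig i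
           @ map (\<lambda>j. (j, True)) (rev [1..<i])"
proof -
  have "[1..<Suc n] = [1..<i] @ [i..<Suc n]"
    using assms by (metis le_SucI less_imp_le_nat upt_add_eq_append le_add_diff_inverse)
  moreover have "[i..<Suc n] = i # Suc i # [Suc (Suc i)..<Suc n]"
    using assms by (simp add: upt_conv_Cons)
  ultimately show ?thesis by (simp add: delta_def sig_def)
qed

lemma delta_sig_Suc:
  assumes "1 \<le> i" "i < n"
  shows "braid_eq (Suc n) (delta (Suc n) @ sig (Suc i)) (sig i @ delta (Suc n))"
proof -
  define A where "A = map (\<lambda>j. (j, True)) (rev [Suc (Suc i)..<Suc n])"
  define C where "C = map (\<lambda>j. (j, True)) (rev [1..<i])"
  have delta: "delta (Suc n) = A @ sig (Suc i) @ sig i @ C"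
    using delta_split[OF assms] by (simp add: A_def C_def)
  have A_commute: "braid_eq (Suc n) (sig i @ A) (A @ sig i)"
    unfolding A_def by (rule sig_commute_far_positive_word) (use assms in auto)
  have C_commute: "braid_eq (Suc n) (sig (Suc i) @ C) (C @ sig (Suc i))"
    unfolding C_def by (rule sig_commute_far_positive_word) (use assms in auto)
  have "braid_eq (Suc n) (delta (Suc n) @ sig (Suc i)) (A @ sig (Suc i) @ sig i @ sig (Suc i) @ C)"
    using braid_eq_append_left[OF braid_eq.sym[OF C_commute], of "A @ sig (Suc i) @ sig i"]
    by (simp add: delta)
  also have "braid_eq (Suc n) \<dots> (A @ sig i @ sig (Suc i) @ sig i @ C)"
    using braid_eq.ctxt[OF braid_eq.sym[OF braid_eq.braid[of i "Suc n"]], of A C] assms by simp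
  also have "braid_eq (Suc n) \<dots> (sig i @ delta (Suc n))"
    using braid_eq_append_right[OF braid_eq.sym[OF A_commute], of "sig (Suc i) @ sig i @ C"]
    by (simp add: delta)
  finally show ?thesis .
qed

lemma delta_letter_Suc:
  assumes "1 \<le> i" "i < n"
  shows "braid_eq (Suc n) (delta (Suc n) @ [(Suc i, b)]) ([(i, b)] @ delta (Suc n))"
proof (cases b)
  case True
  then show ?thesis using delta_sig_Suc[OF assms] by (simp add: sig_def)
next
  case False
  have "in_B (Suc n) (sig (Suc i))" "in_B (Suc n) (sig i)"
    using assms by (auto simp: in_B_def sig_def)
  from braid_eq_intertwine_binv[OF this delta_sig_Suc[OF assms]] False show ?thesis
    by (simp add: sig_def binv_def)
qed

lemma delta_shift:
  "in_B n w \<Longrightarrow> braid_eq (Suc n) (delta (Suc n) @ shift w) (w @ delta (Suc n))"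
proof (induct w)
  case Nil
  show ?case by (simp add: shift_def braid_eq.refl)
next
  case (Cons a w)
  obtain i b where a: "a = (i, b)" by (cases a)
  with Cons.prems have w: "in_B n w" and i: "1 \<le> i" "i < n" by (auto simp: in_B_def)
  have "braid_eq (Suc n) ((delta (Suc n) @ [(Suc i, b)]) @ shift w)
                         (([(i, b)] @ delta (Suc n)) @ shift w)"
    by (rule braid_eq_append_right[OF delta_letter_Suc[OF i]])
  also have "braid_eq (Suc n) \<dots> ([(i, b)] @ w @ delta (Suc n))"
    using braid_eq_append_left[OF Cons.hyps[OF w], of "[(i, b)]"] by simp
  finally show ?case by (simp add: a shift_def)
qed

lemma in_B_delta: "in_B n (delta n)"
  by (auto simp: in_B_def delta_def)

theorem proposition1:
  fixes n :: nat and p p' s :: bword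
  assumes "n \<ge> 2" and "in_B n p" and "in_B n p'" and "in_B n s"
  shows "braid_eq (Suc n) p' (sconj s p) \<longleftrightarrow>
         braid_eq (Suc n) (p' @ binv (delta (Suc n)))
                          (s @ shift p @ sig 1 @ binv (delta (Suc n)) @ binv s)"
proof -
  let ?Di = "binv (delta (Suc n))"
  have "braid_eq (Suc n) (shift (binv s) @ ?Di) (?Di @ binv s)"
    by (rule braid_eq_intertwine_conj[OF in_B_delta delta_shift[OF in_B_binv[OF assms(4)]]])
  then have sconj_delta: "braid_eq (Suc n) (sconj s p @ ?Di) (s @ shift p @ sig 1 @ ?Di @ binv s)"
    using braid_eq_append_left[of "Suc n" _ _ "s @ shift p @ sig 1"] by (simp add: sconj_def)
  have "braid_eq (Suc n) p' (sconj s p) \<longleftrightarrow> braid_eq (Suc n) (p' @ ?Di) (sconj s p @ ?Di)"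
    by (simp add: braid_eq_append_cancel_right in_B_binv in_B_delta)
  also have "\<dots> \<longleftrightarrow> braid_eq (Suc n) (p' @ ?Di) (s @ shift p @ sig 1 @ ?Di @ binv s)"
    using sconj_delta by (blast intro: braid_eq.trans braid_eq.sym)
  finally show ?thesis .
qed

end
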